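(* Consider the algorithm described below (Algorithm A) for a real Hilbert space $H$, a nonempty closed convex set $C\subseteq H$ and a mapping $F\colon H\to H$ that is monotone and Lipschitz continuous with constant $L>0$, where the variational inequality "find $x^*\in C$ with $\langle F(x^* ),x-x^*\rangle\ge0$ for all $x\in C$" has nonempty solution set $S$. Suppose that at some iteration $n\ge1$ the algorithm reaches Step 4(i), i.e. $t_n>0$ and $\lambda_n\ge\lambda_{n-1}$. Then there exists $\lambda_n'\in[\lambda_{n-1},\lambda_n]$ with $\|\lambda_n'F(y_n)-\lambda_{n-1}F(y_{n-1})\|\le\alpha\|y_n-y_{n-1}\|$ (so Step 4(i) is well-defined).
   Context: Convention: $0/0=+\infty$ and $1/0=+\infty$. $P_C$ is the metric projection onto $C$. Algorithm A: Step 1. Choose $x_0\in C$, $\lambda_{-1}>0$, $\theta_0=1$, $\alpha\in(0,\sqrt2-1)$ and $\bar\lambda>0$. Compute $y_0=P_C(x_0-\lambda_{-1}F(x_0))$, $\lambda_0=\min\{\alpha\|x_0-y_0\|/\|F(x_0)-F(y_0)\|,\bar\lambda\}$, $x_1=P_C(x_0-\lambda_0F(y_0))$. Step 2 (for $n\ge1$). Set $\theta_n=1$ and define, for $y\in H$, $\theta>0$, $\lambda(y,\theta)=\min\{\alpha\|y-y_{n-1}\|/\|F(y)-F(y_{n-1})\|,\ \frac{1+\theta_{n-1}}{\theta}\lambda_{n-1},\ \bar\lambda\}$. Compute $y_n=2x_n-x_{n-1}$, $\lambda_n=\lambda(y_n,\theta_n)$, $x_{n+1}=P_C(x_n-\lambda_nF(y_n))$.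 Step 3. If $\|y_n-P_C(x_n-\lambda_nF(y_n))\|+\|x_n-y_n\|=0$, stop ($x_n$ is a solution). Otherwise compute $t_n=-\|x_{n+1}-x_n\|^2+2\lambda_n\langle F(y_n),y_n-x_{n+1}\rangle+(1-\alpha(1+\sqrt2))\|x_n-y_n\|^2-\alpha\|x_n-y_{n-1}\|^2+(1-\sqrt2\alpha)\|x_{n+1}-y_n\|^2$. Step 4. If $t_n\le0$, go to Step 2 with $n:=n+1$. Otherwise: (i) if $\lambda_n\ge\lambda_{n-1}$, choose $\lambda_n'\in[\lambda_{n-1},\lambda_n]$ with $\|\lambda_n'F(y_n)-\lambda_{n-1}F(y_{n-1})\|\le\alpha\|y_n-y_{n-1}\|$, recompute $x_{n+1}=P_C(x_n-\lambda_n'F(y_n))$, set $\lambda_n:=\lambda_n'$, $n:=n+1$, go to Step 2; (ii) if $\lambda_n<\lambda_{n-1}$, find $\theta_n'\in(0,1]$ such that, with $y_n'=x_n+\theta_n'(x_n-x_{n-1})$, one has $\lambda(y_n',\theta_n')\ge\theta_n'\lambda_{n-1}$; then choose $\lambda_n'\in[\theta_n'\lambda_{n-1},\lambda(y_n',\theta_n')]$ with $\|\lambda_n'F(y_n')-\theta_n'\lambda_{n-1}F(y_{n-1})\|\le\alpha\|y_n'-y_{n-1}\|$, recompute $x_{n+1}=P_C(x_n-\lambda_n'F(y_n'))$, set $\lambda_n:=\lambda_n'$, $\theta_n:=\theta_n'$, $y_n:=y_n'$, $n:=n+1$, go to Step 2. *)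

theory Defs
  imports "HOL-Analysis.Analysis"
begin

definition proj :: "'a::{real_inner,complete_space} set \<Rightarrow> 'a \<Rightarrow> 'a" where
  "proj C a = (SOME p. p \<in> C \<and> (\<forall>z\<in>C. dist a p \<le> dist a z))"

definition eratio :: "real \<Rightarrow> real \<Rightarrow> ereal" where
  "eratio a b = (if b = 0 then PInfty else ereal (a / b))"

definition VI_sol :: "'a::real_inner set \<Rightarrow> ('a \<Rightarrow> 'a) \<Rightarrow> 'a set" where
  "VI_sol C F = {xs \<in> C. \<forall>x\<in>C. inner (F xs) (x - xs) \<ge> 0}"

definition monotone_op :: "('a::real_inner \<Rightarrow> 'a) \<Rightarrow> bool" where
  "monotone_op F \<longleftrightarrow> (\<forall>x y. inner (F x - F y) (x - y) \<ge> 0)"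

(* lambda(y,theta) at iteration k (k \<ge> 1), using y_{k-1}, lambda_{k-1}, theta_{k-1} *)
definition lamfun :: "real \<Rightarrow> real \<Rightarrow> ('a::real_normed_vector \<Rightarrow> 'a) \<Rightarrow>
    (nat \<Rightarrow> 'a) \<Rightarrow> (nat \<Rightarrow> real) \<Rightarrow> (nat \<Rightarrow> real) \<Rightarrow> nat \<Rightarrow> 'a \<Rightarrow> real \<Rightarrow> real" where
  "lamfun alpha lbar F y lam theta k v th =
     real_of_ereal (min (eratio (alpha * norm (v - y (k - 1))) (norm (F v - F (y (k - 1)))))
                        (min (ereal ((1 + theta (k - 1)) / th * lam (k - 1))) (ereal lbar)))"

definition ytrial :: "(nat \<Rightarrow> 'a::real_vector) \<Rightarrow> nat \<Rightarrow> 'a" where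
  "ytrial x k = 2 *\<^sub>R x k - x (k - 1)"

definition lamtrial :: "real \<Rightarrow> real \<Rightarrow> ('a::real_normed_vector \<Rightarrow> 'a) \<Rightarrow> (nat \<Rightarrow> 'a) \<Rightarrow>
    (nat \<Rightarrow> 'a) \<Rightarrow> (nat \<Rightarrow> real) \<Rightarrow> (nat \<Rightarrow> real) \<Rightarrow> nat \<Rightarrow> real" where
  "lamtrial alpha lbar F x y lam theta k = lamfun alpha lbar F y lam theta k (ytrial x k) 1"

definition xtrial :: "'a::{real_inner,complete_space} set \<Rightarrow> real \<Rightarrow> real \<Rightarrow> ('a \<Rightarrow> 'a) \<Rightarrow>
    (nat \<Rightarrow> 'a) \<Rightarrow> (nat \<Rightarrow> 'a) \<Rightarrow> (nat \<Rightarrow> real) \<Rightarrow> (nat \<Rightarrow> real) \<Rightarrow> nat \<Rightarrow> 'a" where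
  "xtrial C alpha lbar F x y lam theta k =
     proj C (x k - lamtrial alpha lbar F x y lam theta k *\<^sub>R F (ytrial x k))"

definition stoptest :: "'a::{real_inner,complete_space} set \<Rightarrow> ('a \<Rightarrow> 'a) \<Rightarrow> 'a \<Rightarrow> 'a \<Rightarrow> real \<Rightarrow> bool" where
  "stoptest C F xk yk l \<longleftrightarrow> norm (yk - proj C (xk - l *\<^sub>R F yk)) + norm (xk - yk) = 0"

definition tval :: "real \<Rightarrow> ('a::real_inner \<Rightarrow> 'a) \<Rightarrow> 'a \<Rightarrow> 'a \<Rightarrow> 'a \<Rightarrow> 'a \<Rightarrow> real \<Rightarrow> real" where
  "tval alpha F xk yk ykm1 xnext l =
     - (norm (xnext - xk))\<^sup>2 + 2 * l * inner (F yk) (yk - xnext)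
     + (1 - alpha * (1 + sqrt 2)) * (norm (xk - yk))\<^sup>2
     - alpha * (norm (xk - ykm1))\<^sup>2
     + (1 - sqrt 2 * alpha) * (norm (xnext - yk))\<^sup>2"

definition ttrial :: "'a::{real_inner,complete_space} set \<Rightarrow> real \<Rightarrow> real \<Rightarrow> ('a \<Rightarrow> 'a) \<Rightarrow>
    (nat \<Rightarrow> 'a) \<Rightarrow> (nat \<Rightarrow> 'a) \<Rightarrow> (nat \<Rightarrow> real) \<Rightarrow> (nat \<Rightarrow> real) \<Rightarrow> nat \<Rightarrow> real" where
  "ttrial C alpha lbar F x y lam theta k =
     tval alpha F (x k) (ytrial x k) (y (k - 1)) (xtrial C alpha lbar F x y lam theta k)
          (lamtrial alpha lbar F x y lam theta k)"

(* Step 1: initialisation.  lamm1 = lambda_{-1}. *)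
definition algA_init :: "'a::{real_inner,complete_space} set \<Rightarrow> ('a \<Rightarrow> 'a) \<Rightarrow> real \<Rightarrow> real \<Rightarrow> real \<Rightarrow>
    (nat \<Rightarrow> 'a) \<Rightarrow> (nat \<Rightarrow> 'a) \<Rightarrow> (nat \<Rightarrow> real) \<Rightarrow> (nat \<Rightarrow> real) \<Rightarrow> bool" where
  "algA_init C F alpha lbar lamm1 x y lam theta \<longleftrightarrow>
     x 0 \<in> C \<and> theta 0 = 1 \<and>
     y 0 = proj C (x 0 - lamm1 *\<^sub>R F (x 0)) \<and>
     lam 0 = real_of_ereal (min (eratio (alpha * norm (x 0 - y 0)) (norm (F (x 0) - F (y 0)))) (ereal lbar)) \<and>
     x 1 = proj C (x 0 - lam 0 *\<^sub>R F (y 0))"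

(* Iteration k \<ge> 1 carried out completely (Steps 2-4, not stopped), producing
   theta_k, y_k, lambda_k, x_{k+1} as finally set by the algorithm. *)
definition algA_step :: "'a::{real_inner,complete_space} set \<Rightarrow> ('a \<Rightarrow> 'a) \<Rightarrow> real \<Rightarrow> real \<Rightarrow>
    (nat \<Rightarrow> 'a) \<Rightarrow> (nat \<Rightarrow> 'a) \<Rightarrow> (nat \<Rightarrow> real) \<Rightarrow> (nat \<Rightarrow> real) \<Rightarrow> nat \<Rightarrow> bool" where
  "algA_step C F alpha lbar x y lam theta k \<longleftrightarrow>
     \<not> stoptest C F (x k) (ytrial x k) (lamtrial alpha lbar F x y lam theta k) \<and>
     ( (ttrial C alpha lbar F x y lam theta k \<le> 0 \<and>
        theta k = 1 \<and> y k = ytrial x k \<and> lam k = lamtrial alpha lbar F x y lam theta k \<and>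
        x (Suc k) = xtrial C alpha lbar F x y lam theta k)
     \<or> (ttrial C alpha lbar F x y lam theta k > 0 \<and>
        lamtrial alpha lbar F x y lam theta k \<ge> lam (k - 1) \<and>
        theta k = 1 \<and> y k = ytrial x k \<and>
        lam (k - 1) \<le> lam k \<and> lam k \<le> lamtrial alpha lbar F x y lam theta k \<and>
        norm (lam k *\<^sub>R F (y k) - lam (k - 1) *\<^sub>R F (y (k - 1))) \<le> alpha * norm (y k - y (k - 1)) \<and>
        x (Suc k) = proj C (x k - lam k *\<^sub>R F (y k)))
     \<or> (ttrial C alpha lbar F x y lam theta k > 0 \<and>
        lamtrial alpha lbar F x y lam theta k < lam (k - 1) \<and>
        0 < theta k \<and> theta k \<le> 1 \<and>
        y k = x k + theta k *\<^sub>R (x k - x (k - 1)) \<and>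
        lamfun alpha lbar F y lam theta k (y k) (theta k) \<ge> theta k * lam (k - 1) \<and>
        theta k * lam (k - 1) \<le> lam k \<and> lam k \<le> lamfun alpha lbar F y lam theta k (y k) (theta k) \<and>
        norm (lam k *\<^sub>R F (y k) - (theta k * lam (k - 1)) *\<^sub>R F (y (k - 1))) \<le> alpha * norm (y k - y (k - 1)) \<and>
        x (Suc k) = proj C (x k - lam k *\<^sub>R F (y k))))"

end

theory Submission
  imports Defs
begin

text \<open>The choice \<open>\<lambda>\<^sub>n' = \<lambda>\<^sub>n\<^sub>-\<^sub>1\<close> always works: since \<open>\<lambda>\<^sub>n\<^sub>-\<^sub>1 \<le> \<lambda>\<^sub>n \<le> \<alpha>\<parallel>y\<^sub>n - y\<^sub>n\<^sub>-\<^sub>1\<parallel> / \<parallel>F y\<^sub>n - F y\<^sub>n\<^sub>-\<^sub>1\<parallel>\<close>,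
  the difference \<open>\<lambda>\<^sub>n\<^sub>-\<^sub>1 F y\<^sub>n - \<lambda>\<^sub>n\<^sub>-\<^sub>1 F y\<^sub>n\<^sub>-\<^sub>1\<close> has norm at most \<open>\<alpha>\<parallel>y\<^sub>n - y\<^sub>n\<^sub>-\<^sub>1\<parallel>\<close>.
  The only other ingredient is that all step sizes produced so far are nonnegative.\<close>

lemma lamfun_eq:
  "lamfun alpha lbar F y lam theta k v th =
    (if norm (F v - F (y (k - 1))) = 0 then min ((1 + theta (k - 1)) / th * lam (k - 1)) lbar
     else min (alpha * norm (v - y (k - 1)) / norm (F v - F (y (k - 1))))
              (min ((1 + theta (k - 1)) / th * lam (k - 1)) lbar))"
  unfolding lamfun_def eratio_def by (auto simp: min_def)

lemma lamfun_nonneg: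
  assumes "0 < alpha" "0 \<le> lbar" "0 \<le> (1 + theta (k - 1)) / th * lam (k - 1)"
  shows "0 \<le> lamfun alpha lbar F y lam theta k v th"
  using assms by (simp add: lamfun_eq)

lemma mult_norm_le_of_le_lamfun:
  assumes "0 \<le> alpha" "0 \<le> m" "m \<le> lamfun alpha lbar F y lam theta k v th"
  shows "m * norm (F v - F (y (k - 1))) \<le> alpha * norm (v - y (k - 1))"
proof (cases "F v = F (y (k - 1))")
  case False
  then have pos: "norm (F v - F (y (k - 1))) > 0" by simp
  have "m \<le> alpha * norm (v - y (k - 1)) / norm (F v - F (y (k - 1)))"
    using assms(3) False by (simp add: lamfun_eq)
  then show ?thesis using pos by (simp add: pos_le_divide_eq)
qed (use assms in simp)

lemma algA_init_lam_nonneg: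
  assumes "algA_init C F alpha lbar lamm1 x y lam theta" "0 < alpha" "0 \<le> lbar"
  shows "0 \<le> lam 0"
  using assms unfolding algA_init_def eratio_def by (auto simp: min_def)

lemma algA_step_preserves_nonneg:
  assumes "algA_step C F alpha lbar x y lam theta (Suc k)"
    and "0 \<le> lam k" "0 < theta k" "0 < alpha" "0 \<le> lbar"
  shows "0 \<le> lam (Suc k) \<and> 0 < theta (Suc k)"
proof -
  have "0 \<le> lamtrial alpha lbar F x y lam theta (Suc k)"
    unfolding lamtrial_def by (rule lamfun_nonneg) (use assms in auto)
  then show ?thesis
    using assms unfolding algA_step_def
    by (auto intro: order_trans[of 0 "theta (Suc k) * lam k"])
qed

lemma algA_lam_nonneg:
  assumes "algA_init C F alpha lbar lamm1 x y lam theta"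
    and "\<forall>k. 1 \<le> k \<and> k < n \<longrightarrow> algA_step C F alpha lbar x y lam theta k"
    and "0 < alpha" "0 \<le> lbar" "k < n"
  shows "0 \<le> lam k"
proof -
  have "k < n \<longrightarrow> 0 \<le> lam k \<and> 0 < theta k" for k
  proof (induction k)
    case 0
    then show ?case
      using algA_init_lam_nonneg[OF assms(1,3,4)] assms(1) by (simp add: algA_init_def)
  next
    case (Suc k)
    then show ?case
      using algA_step_preserves_nonneg[of C F alpha lbar x y lam theta k] assms(2-4) by auto
  qed
  then show ?thesis using assms(5) by blast
qed

theorem lemma4p3:
  fixes C :: "'a::{real_inner,complete_space} set" and F :: "'a \<Rightarrow> 'a"
    and L alpha lbar lamm1 :: real
    and x y :: "nat \<Rightarrow> 'a" and lam theta :: "nat \<Rightarrow> real" and n :: nat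
  assumes "C \<noteq> {}" and "closed C" and "convex C"
    and "monotone_op F" and "L > 0" and "L-lipschitz_on UNIV F"
    and "VI_sol C F \<noteq> {}"
    and "0 < alpha" and "alpha < sqrt 2 - 1" and "lbar > 0" and "lamm1 > 0"
    and "algA_init C F alpha lbar lamm1 x y lam theta"
    and "\<forall>k. 1 \<le> k \<and> k < n \<longrightarrow> algA_step C F alpha lbar x y lam theta k"
    and "n \<ge> 1"
    and "\<not> stoptest C F (x n) (ytrial x n) (lamtrial alpha lbar F x y lam theta n)"
    and "ttrial C alpha lbar F x y lam theta n > 0"
    and "lamtrial alpha lbar F x y lam theta n \<ge> lam (n - 1)"
  shows "\<exists>l. lam (n - 1) \<le> l \<and> l \<le> lamtrial alpha lbar F x y lam theta n \<and>
             norm (l *\<^sub>R F (ytrial x n) - lam (n - 1) *\<^sub>R F (y (n - 1)))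
               \<le> alpha * norm (ytrial x n - y (n - 1))"
proof -
  have nonneg: "0 \<le> lam (n - 1)"
    using algA_lam_nonneg[OF assms(12,13,8)] assms(10,14) by simp
  have "lam (n - 1) * norm (F (ytrial x n) - F (y (n - 1))) \<le> alpha * norm (ytrial x n - y (n - 1))"
    by (rule mult_norm_le_of_le_lamfun[OF _ nonneg])
      (use assms(8,17) in \<open>simp_all add: lamtrial_def\<close>)
  then have "norm (lam (n - 1) *\<^sub>R F (ytrial x n) - lam (n - 1) *\<^sub>R F (y (n - 1)))
      \<le> alpha * norm (ytrial x n - y (n - 1))"
    using nonneg by (simp flip: scaleR_diff_right)
  then show ?thesis using assms(17) by blast
qed

end
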